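(* Let $\mathbf{X}$ be a zero-mean weakly stationary real process with absolutely summable autocovariance, let $\mathbf{h}$ be a real impulse response with $\|\mathbf{h}\|_1<\infty$, and let $Y_t=\sum_{\tau\in\mathbb{Z}}X_{t-\tau}h_\tau$. For $N\ge1$ and $-N\le k\le N-1$ define the truncated output $Y'_k=\sum_{j=-N}^{N-1}h_{k-j}X_j$. Let $\Sigma_{Y_{-N:N-1}}$ and $\Sigma_{Y'_{-N:N-1}}$ be the covariance matrices of the random vectors $(Y_{-N},\dots,Y_{N-1})$ and $(Y'_{-N},\dots,Y'_{N-1})$. Then $$\lim_{N\to\infty}\big|\tau_{2N}(\Sigma_{Y_{-N:N-1}})-\tau_{2N}(\Sigma_{Y'_{-N:N-1}})\big|=0 .$$
   Context: $\tau_n(B)=\mathrm{tr}(B)/n$ for an $n\times n$ matrix $B$. Weakly stationary means constant mean and $\mathbb{E}[X_tX_{t+\tau}]=C_{xx}(\tau)$ independent of $t$. *)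

theory Defs
  imports "HOL-Probability.Probability"
begin

definition covar :: "'a measure \<Rightarrow> ('a \<Rightarrow> real) \<Rightarrow> ('a \<Rightarrow> real) \<Rightarrow> real" where
  "covar M U V = (\<integral>\<omega>. (U \<omega> - (\<integral>x. U x \<partial>M)) * (V \<omega> - (\<integral>x. V x \<partial>M)) \<partial>M)"

definition cov_matrix :: "'a measure \<Rightarrow> (int \<Rightarrow> 'a \<Rightarrow> real) \<Rightarrow> int \<Rightarrow> int \<Rightarrow> real" where
  "cov_matrix M Z i j = covar M (Z i) (Z j)"

definition ntrace :: "int set \<Rightarrow> (int \<Rightarrow> int \<Rightarrow> real) \<Rightarrow> real" where
  "ntrace I B = (\<Sum>i\<in>I. B i i) / real (card I)"

definition filt_out :: "(int \<Rightarrow> 'a \<Rightarrow> real) \<Rightarrow> (int \<Rightarrow> real) \<Rightarrow> int \<Rightarrow> 'a \<Rightarrow> real" where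
  "filt_out X h t \<omega> = (\<Sum>\<^sub>\<infinity>\<tau>\<in>(UNIV::int set). X (t - \<tau>) \<omega> * h \<tau>)"

definition trunc_out :: "(int \<Rightarrow> 'a \<Rightarrow> real) \<Rightarrow> (int \<Rightarrow> real) \<Rightarrow> nat \<Rightarrow> int \<Rightarrow> 'a \<Rightarrow> real" where
  "trunc_out X h N k \<omega> = (\<Sum>j\<in>{-int N..int N - 1}. h (k - j) * X j \<omega>)"

end

theory Submission
  imports Defs
begin

text \<open>Every diagonal entry of the
  covariance of the output \<open>Y\<close> equals the output power
  \<open>R = lim n. \<Sum>a,b \<in> [-n, n]. h a * h b * C (a - b)\<close>: the filter series converges almost
  surely and in mean square, dominated by \<open>(\<Sum>a. |X (k - a)| * |h a|)\<^sup>2\<close>, whose expectation is at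
  most \<open>2 C 0 \<parallel>h\<parallel>\<^sub>1\<^sup>2\<close>. The \<open>k\<close>-th diagonal entry for the truncated output is the same double sum
  over the window of taps \<open>[k - N + 1, k + N]\<close>, so it differs from \<open>R\<close> by at most
  \<open>2 \<parallel>C\<parallel>\<^sub>1 \<parallel>h\<parallel>\<^sub>1\<close> times the mass of \<open>|h|\<close> outside that window. These tail masses average out
  to 0 over \<open>-N \<le> k < N\<close>, because all but \<open>2M\<close> of the windows contain \<open>[-M, M]\<close>.\<close>

abbreviation sym_ival :: "nat \<Rightarrow> int set" where
  "sym_ival n \<equiv> {-int n..int n}"

lemma finite_subset_sym_ival:
  fixes F :: "int set"
  assumes "finite F"
  obtains n where "F \<subseteq> sym_ival n"
proof -
  obtain b where b: "\<And>y. y \<in> F \<Longrightarrow> \<bar>y\<bar> \<le> b"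
    using bdd_above_finite[of "abs ` F"] assms by (auto simp: bdd_above_def)
  then have "F \<subseteq> sym_ival (nat b)"
    by (force simp: abs_le_iff)
  then show ?thesis by (rule that)
qed

lemma filterlim_sym_ival_finite_subsets:
  "filterlim sym_ival (finite_subsets_at_top UNIV) sequentially"
  unfolding filterlim_finite_subsets_at_top
proof (intro allI impI)
  fix F :: "int set"
  assume "finite F \<and> F \<subseteq> UNIV"
  then obtain n where n: "F \<subseteq> sym_ival n" by (meson finite_subset_sym_ival)
  show "\<forall>\<^sub>F m in sequentially. finite (sym_ival m) \<and> F \<subseteq> sym_ival m \<and> sym_ival m \<subseteq> UNIV"
    by (rule eventually_mono[OF eventually_ge_at_top[of n]]) (use n in auto)
qed

lemma has_sum_sym_ival_tendsto:
  assumes "(f has_sum s) (UNIV :: int set)"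
  shows "(\<lambda>n. \<Sum>a\<in>sym_ival n. f a) \<longlonglongrightarrow> s"
  using filterlim_compose[OF assms[unfolded has_sum_def] filterlim_sym_ival_finite_subsets]
  by (simp add: o_def)

lemma summable_on_int_iff_bdd_sym_ival_sums:
  fixes f :: "int \<Rightarrow> real"
  shows "f summable_on UNIV \<longleftrightarrow> bdd_above (range (\<lambda>n. \<Sum>a\<in>sym_ival n. \<bar>f a\<bar>))"
proof -
  have "f summable_on UNIV \<longleftrightarrow> bdd_above ((\<lambda>F. \<Sum>a\<in>F. \<bar>f a\<bar>) ` {F. finite F})"
    using abs_summable_iff_bdd_above[of f UNIV] summable_on_iff_abs_summable_on_real[of f]
    by simp
  also have "\<dots> \<longleftrightarrow> bdd_above (range (\<lambda>n. \<Sum>a\<in>sym_ival n. \<bar>f a\<bar>))"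
  proof
    assume "bdd_above ((\<lambda>F. \<Sum>a\<in>F. \<bar>f a\<bar>) ` {F. finite F})"
    then show "bdd_above (range (\<lambda>n. \<Sum>a\<in>sym_ival n. \<bar>f a\<bar>))"
      by (rule bdd_above_mono) auto
  next
    assume "bdd_above (range (\<lambda>n. \<Sum>a\<in>sym_ival n. \<bar>f a\<bar>))"
    then obtain B where B: "\<And>n. (\<Sum>a\<in>sym_ival n. \<bar>f a\<bar>) \<le> B"
      by (auto simp: bdd_above_def)
    show "bdd_above ((\<lambda>F. \<Sum>a\<in>F. \<bar>f a\<bar>) ` {F. finite F})"
    proof (rule bdd_aboveI2)
      fix F :: "int set"
      assume "F \<in> {F. finite F}"
      then obtain n where "F \<subseteq> sym_ival n" by (meson finite_subset_sym_ival mem_Collect_eq)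
      then have "(\<Sum>a\<in>F. \<bar>f a\<bar>) \<le> (\<Sum>a\<in>sym_ival n. \<bar>f a\<bar>)"
        by (intro sum_mono2) auto
      also have "\<dots> \<le> B" by (rule B)
      finally show "(\<Sum>a\<in>F. \<bar>f a\<bar>) \<le> B" .
    qed
  qed
  finally show ?thesis .
qed

lemma infsum_outside_sym_ival_tendsto_zero:
  fixes g :: "int \<Rightarrow> real"
  assumes "g summable_on UNIV"
  shows "(\<lambda>n. infsum g (- sym_ival n)) \<longlonglongrightarrow> 0"
proof -
  have "infsum g (- sym_ival n) = infsum g UNIV - (\<Sum>a\<in>sym_ival n. g a)" for n
    using infsum_Diff[OF assms, of "sym_ival n"] by (simp add: Compl_eq_Diff_UNIV)
  moreover have "(\<lambda>n. infsum g UNIV - (\<Sum>a\<in>sym_ival n. g a)) \<longlonglongrightarrow> infsum g UNIV - infsum g UNIV"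
    by (intro tendsto_diff tendsto_const has_sum_sym_ival_tendsto has_sum_infsum assms)
  ultimately show ?thesis by simp
qed

lemma sum_window_tails_le:
  fixes g :: "int \<Rightarrow> real"
  assumes nonneg: "\<And>a. 0 \<le> g a" and summable: "g summable_on UNIV"
  shows "(\<Sum>k\<in>{-int N..int N - 1}. infsum g (- {k - int N + 1..k + int N}))
           \<le> real (2 * M) * infsum g UNIV + real (2 * N) * infsum g (- sym_ival M)"
proof -
  define I where "I = {-int N..int N - 1}"
  define Edge where "Edge = {-int N..int M - int N - 1} \<union> {int N - int M..int N - 1}"
  define tail where "tail k = infsum g (- {k - int N + 1..k + int N})" for k
  have infsum_le: "infsum g A \<le> infsum g B" if "A \<subseteq> B" for A B
    using that summable nonneg by (intro infsum_mono2) (auto intro: summable_on_subset_banach)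
  have "card (I \<inter> Edge) \<le> card {-int N..int M - int N - 1} + card {int N - int M..int N - 1}"
    unfolding Edge_def by (intro order_trans[OF card_mono card_Un_le]) auto
  then have card_edge: "card (I \<inter> Edge) \<le> 2 * M" by simp
  have card_inner: "card (I - Edge) \<le> 2 * N"
    using card_mono[of I "I - Edge"] by (auto simp: I_def)
  \<comment> \<open>away from the ends of \<open>I\<close>, the window of \<open>k\<close> contains \<open>sym_ival M\<close>\<close>
  have tail_inner: "tail k \<le> infsum g (- sym_ival M)" if "k \<in> I - Edge" for k
    using that unfolding tail_def I_def Edge_def by (intro infsum_le) auto
  have "(\<Sum>k\<in>I. tail k) = (\<Sum>k\<in>I \<inter> Edge. tail k) + (\<Sum>k\<in>I - Edge. tail k)"
    by (rule sum.Int_Diff) (simp add: I_def)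
  also have "\<dots> \<le> real (card (I \<inter> Edge)) * infsum g UNIV
      + real (card (I - Edge)) * infsum g (- sym_ival M)"
    using tail_inner by (intro add_mono sum_bounded_above) (auto simp: tail_def intro: infsum_le)
  also have "\<dots> \<le> real (2 * M) * infsum g UNIV + real (2 * N) * infsum g (- sym_ival M)"
    using card_edge card_inner nonneg
    by (intro add_mono mult_right_mono infsum_nonneg) auto
  finally show ?thesis unfolding I_def tail_def .
qed

lemma window_tails_average_tendsto_zero:
  fixes g :: "int \<Rightarrow> real"
  assumes nonneg: "\<And>a. 0 \<le> g a" and summable: "g summable_on UNIV"
  shows "(\<lambda>N. (\<Sum>k\<in>{-int N..int N - 1}. infsum g (- {k - int N + 1..k + int N})) / real (2 * N))
           \<longlonglongrightarrow> 0"
    (is "?avg \<longlonglongrightarrow> 0")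
proof (rule order_tendstoI)
  fix r :: real
  assume "r < 0"
  moreover have "0 \<le> ?avg N" for N
    using nonneg by (intro divide_nonneg_nonneg sum_nonneg infsum_nonneg) auto
  ultimately show "\<forall>\<^sub>F N in sequentially. r < ?avg N"
    by (intro always_eventually allI) (meson less_le_trans)
next
  fix r :: real
  assume r: "0 < r"
  define H where "H = infsum g UNIV"
  have "\<forall>\<^sub>F M in sequentially. infsum g (- sym_ival M) < r / 2"
    using r by (intro order_tendstoD(2)[OF infsum_outside_sym_ival_tendsto_zero[OF summable]]) auto
  then obtain M where tail: "infsum g (- sym_ival M) < r / 2"
    using eventually_happens' sequentially_bot by blast
  have "(\<lambda>N. real M * H / real N) \<longlonglongrightarrow> 0"
    by (intro tendsto_divide_0[OF tendsto_const] filterlim_at_top_imp_at_infinity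
        filterlim_real_sequentially)
  then have "\<forall>\<^sub>F N in sequentially. real M * H / real N < r / 2"
    using r by (intro order_tendstoD(2)) auto
  then show "\<forall>\<^sub>F N in sequentially. ?avg N < r"
    using eventually_gt_at_top[of 0]
  proof eventually_elim
    case (elim N)
    have "?avg N \<le> (real (2 * M) * H + real (2 * N) * infsum g (- sym_ival M)) / real (2 * N)"
      unfolding H_def using elim by (intro divide_right_mono sum_window_tails_le nonneg summable) auto
    also have "\<dots> = real M * H / real N + infsum g (- sym_ival M)"
      using elim by (simp add: field_simps)
    finally show ?case using elim tail by linarith
  qed
qed

lemma abs_mult_le_sum_squares:
  fixes a b :: real
  shows "\<bar>a * b\<bar> \<le> a\<^sup>2 + b\<^sup>2"
proof -
  have "2 * (\<bar>a\<bar> * \<bar>b\<bar>) \<le> a\<^sup>2 + b\<^sup>2"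
    using sum_squares_bound[of "\<bar>a\<bar>" "\<bar>b\<bar>"] by (simp add: mult.assoc)
  moreover have "0 \<le> \<bar>a\<bar> * \<bar>b\<bar>" by simp
  ultimately show ?thesis unfolding abs_mult by linarith
qed

lemma le_one_plus_square:
  fixes x :: real
  shows "x \<le> 1 + x\<^sup>2"
proof -
  have "2 * x \<le> 1 + x\<^sup>2" using sum_squares_bound[of 1 x] by simp
  then show ?thesis using zero_le_power2[of x] by linarith
qed

lemma abs_double_sum_le:
  fixes h c :: "int \<Rightarrow> real"
  assumes "\<And>x. \<bar>c x\<bar> \<le> K"
  shows "\<bar>\<Sum>a\<in>P. \<Sum>b\<in>Q. h a * h b * c (a - b)\<bar> \<le> K * ((\<Sum>a\<in>P. \<bar>h a\<bar>) * (\<Sum>b\<in>Q. \<bar>h b\<bar>))"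
proof -
  have "\<bar>\<Sum>a\<in>P. \<Sum>b\<in>Q. h a * h b * c (a - b)\<bar> \<le> (\<Sum>a\<in>P. \<Sum>b\<in>Q. \<bar>h a * h b * c (a - b)\<bar>)"
    by (rule order_trans[OF sum_abs]) (intro sum_mono sum_abs)
  also have "\<dots> \<le> (\<Sum>a\<in>P. \<Sum>b\<in>Q. K * (\<bar>h a\<bar> * \<bar>h b\<bar>))"
    using assms by (intro sum_mono) (simp add: abs_mult mult.commute mult_right_mono)
  also have "\<dots> = K * (\<Sum>a\<in>P. \<Sum>b\<in>Q. \<bar>h a\<bar> * \<bar>h b\<bar>)"
    by (simp add: sum_distrib_left)
  also have "\<dots> = K * ((\<Sum>a\<in>P. \<bar>h a\<bar>) * (\<Sum>b\<in>Q. \<bar>h b\<bar>))"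
    by (simp only: sum_product)
  finally show ?thesis .
qed

locale stationary_filter = prob_space M for M :: "'a measure" +
  fixes X :: "int \<Rightarrow> 'a \<Rightarrow> real" and C :: "int \<Rightarrow> real" and h :: "int \<Rightarrow> real"
  assumes measurable_X[measurable]: "\<And>t. X t \<in> borel_measurable M"
    and integrable_X_sq: "\<And>t. integrable M (\<lambda>\<omega>. (X t \<omega>)\<^sup>2)"
    and integral_X: "\<And>t. (\<integral>\<omega>. X t \<omega> \<partial>M) = 0"
    and autocovariance: "\<And>t \<tau>. (\<integral>\<omega>. X t \<omega> * X (t + \<tau>) \<omega> \<partial>M) = C \<tau>"
    and summable_C: "(\<lambda>\<tau>. \<bar>C \<tau>\<bar>) summable_on UNIV"
    and summable_h: "(\<lambda>\<tau>. \<bar>h \<tau>\<bar>) summable_on UNIV"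
begin

lemma integrable_X: "integrable M (X t)"
  by (rule square_integrable_imp_integrable[OF measurable_X integrable_X_sq])

lemma integrable_X_mult_X: "integrable M (\<lambda>\<omega>. X s \<omega> * X t \<omega>)"
  by (rule Bochner_Integration.integrable_bound[where f="\<lambda>\<omega>. (X s \<omega>)\<^sup>2 + (X t \<omega>)\<^sup>2"])
     (auto intro!: integrable_X_sq simp: abs_mult_le_sum_squares)

lemma integral_X_mult_X: "(\<integral>\<omega>. X s \<omega> * X t \<omega> \<partial>M) = C (t - s)"
  using autocovariance[of s "t - s"] by simp

lemma integral_X_sq: "(\<integral>\<omega>. (X t \<omega>)\<^sup>2 \<partial>M) = C 0"
  using autocovariance[of t 0] by (simp add: power2_eq_square)

lemma C_0_nonneg: "0 \<le> C 0"
  using integral_X_sq[of 0] by (metis integral_nonneg_AE zero_le_power2 AE_I2)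

lemma integral_abs_X_mult_X_le: "(\<integral>\<omega>. \<bar>X s \<omega> * X t \<omega>\<bar> \<partial>M) \<le> 2 * C 0"
proof -
  have "(\<integral>\<omega>. \<bar>X s \<omega> * X t \<omega>\<bar> \<partial>M) \<le> (\<integral>\<omega>. (X s \<omega>)\<^sup>2 + (X t \<omega>)\<^sup>2 \<partial>M)"
    by (rule Bochner_Integration.integral_mono)
       (auto intro!: integrable_X_mult_X integrable_X_sq simp: abs_mult_le_sum_squares)
  also have "\<dots> = 2 * C 0" using integrable_X_sq integral_X_sq by simp
  finally show ?thesis .
qed

definition h_norm :: real where "h_norm = infsum (\<lambda>a. \<bar>h a\<bar>) UNIV"
definition C_norm :: real where "C_norm = infsum (\<lambda>a. \<bar>C a\<bar>) UNIV"
definition h_tail :: "int set \<Rightarrow> real" where "h_tail A = infsum (\<lambda>a. \<bar>h a\<bar>) (- A)"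

lemma h_norm_nonneg: "0 \<le> h_norm"
  unfolding h_norm_def by (rule infsum_nonneg) auto

lemma C_norm_nonneg: "0 \<le> C_norm"
  unfolding C_norm_def by (rule infsum_nonneg) auto

lemma h_tail_nonneg: "0 \<le> h_tail A"
  unfolding h_tail_def by (rule infsum_nonneg) auto

lemma abs_C_le_C_norm: "\<bar>C x\<bar> \<le> C_norm"
  using finite_sum_le_infsum[of "\<lambda>a. \<bar>C a\<bar>" UNIV "{x}"] summable_C by (simp add: C_norm_def)

lemma sum_abs_h_le_h_norm: "finite A \<Longrightarrow> (\<Sum>a\<in>A. \<bar>h a\<bar>) \<le> h_norm"
  unfolding h_norm_def by (rule finite_sum_le_infsum) (use summable_h in auto)

lemma sum_abs_h_diff_le_h_tail: "finite B \<Longrightarrow> (\<Sum>a\<in>B - A. \<bar>h a\<bar>) \<le> h_tail A"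
  unfolding h_tail_def
  by (rule finite_sum_le_infsum) (use summable_h summable_on_subset_banach in auto)

definition fir_out :: "int set \<Rightarrow> int \<Rightarrow> 'a \<Rightarrow> real" where
  "fir_out A k \<omega> = (\<Sum>a\<in>A. X (k - a) \<omega> * h a)"

definition fir_abs_out :: "int set \<Rightarrow> int \<Rightarrow> 'a \<Rightarrow> real" where
  "fir_abs_out A k \<omega> = (\<Sum>a\<in>A. \<bar>X (k - a) \<omega>\<bar> * \<bar>h a\<bar>)"

definition fir_power :: "int set \<Rightarrow> real" where
  "fir_power A = (\<Sum>a\<in>A. \<Sum>b\<in>A. h a * h b * C (a - b))"

lemma measurable_fir_out[measurable]: "fir_out A k \<in> borel_measurable M"
  unfolding fir_out_def by measurable

lemma measurable_fir_abs_out[measurable]: "fir_abs_out A k \<in> borel_measurable M"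
  unfolding fir_abs_out_def by measurable

lemma fir_abs_out_nonneg: "0 \<le> fir_abs_out A k \<omega>"
  unfolding fir_abs_out_def by (intro sum_nonneg) auto

lemma fir_abs_out_mono: "A \<subseteq> B \<Longrightarrow> finite B \<Longrightarrow> fir_abs_out A k \<omega> \<le> fir_abs_out B k \<omega>"
  unfolding fir_abs_out_def by (rule sum_mono2) auto

lemma abs_fir_out_le: "\<bar>fir_out A k \<omega>\<bar> \<le> fir_abs_out A k \<omega>"
  unfolding fir_out_def fir_abs_out_def by (rule order_trans[OF sum_abs]) (simp add: abs_mult)

lemma integral_fir_out: "finite A \<Longrightarrow> (\<integral>\<omega>. fir_out A k \<omega> \<partial>M) = 0"
  unfolding fir_out_def
  by (subst Bochner_Integration.integral_sum)
     (auto intro!: integrable_mult_left integrable_X simp: integral_X)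

lemma fir_out_sq_eq:
  "(fir_out A k \<omega>)\<^sup>2 = (\<Sum>a\<in>A. \<Sum>b\<in>A. (X (k - a) \<omega> * X (k - b) \<omega>) * (h a * h b))"
  unfolding fir_out_def power2_eq_square sum_product by (simp add: mult_ac)

lemma fir_abs_out_sq_eq:
  "(fir_abs_out A k \<omega>)\<^sup>2 = (\<Sum>a\<in>A. \<Sum>b\<in>A. \<bar>X (k - a) \<omega> * X (k - b) \<omega>\<bar> * (\<bar>h a\<bar> * \<bar>h b\<bar>))"
  unfolding fir_abs_out_def power2_eq_square sum_product by (simp add: mult_ac abs_mult)

lemma integral_fir_out_sq: "(\<integral>\<omega>. (fir_out A k \<omega>)\<^sup>2 \<partial>M) = fir_power A"
  unfolding fir_out_sq_eq fir_power_def
  by (simp add: Bochner_Integration.integral_sum integrable_X_mult_X integral_X_mult_X mult_ac)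

lemma integrable_fir_abs_out_sq: "integrable M (\<lambda>\<omega>. (fir_abs_out A k \<omega>)\<^sup>2)"
  unfolding fir_abs_out_sq_eq
  by (intro Bochner_Integration.integrable_sum integrable_mult_left integrable_abs integrable_X_mult_X)

lemma integral_fir_abs_out_sq_le:
  assumes "finite A"
  shows "(\<integral>\<omega>. (fir_abs_out A k \<omega>)\<^sup>2 \<partial>M) \<le> 2 * C 0 * h_norm\<^sup>2"
proof -
  have "(\<integral>\<omega>. (fir_abs_out A k \<omega>)\<^sup>2 \<partial>M)
      = (\<Sum>a\<in>A. \<Sum>b\<in>A. (\<integral>\<omega>. \<bar>X (k - a) \<omega> * X (k - b) \<omega>\<bar> \<partial>M) * (\<bar>h a\<bar> * \<bar>h b\<bar>))"
    unfolding fir_abs_out_sq_eq by (simp add: Bochner_Integration.integral_sum integrable_X_mult_X)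
  also have "\<dots> \<le> (\<Sum>a\<in>A. \<Sum>b\<in>A. (2 * C 0) * (\<bar>h a\<bar> * \<bar>h b\<bar>))"
    by (intro sum_mono mult_right_mono integral_abs_X_mult_X_le) auto
  also have "\<dots> = 2 * C 0 * (\<Sum>a\<in>A. \<bar>h a\<bar>)\<^sup>2"
    by (simp add: power2_eq_square sum_product sum_distrib_left mult_ac)
  also have "\<dots> \<le> 2 * C 0 * h_norm\<^sup>2"
    using sum_abs_h_le_h_norm[OF assms] C_0_nonneg by (intro mult_left_mono power_mono) auto
  finally show ?thesis .
qed

text \<open>The square of \<open>\<Sum>a. |X (k - a) \<omega>| * |h a|\<close>; it dominates the squared partial sums of the
  filter series.\<close>

definition abs_series_sq :: "int \<Rightarrow> 'a \<Rightarrow> ennreal" where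
  "abs_series_sq k \<omega> = (SUP n. ennreal ((fir_abs_out (sym_ival n) k \<omega>)\<^sup>2))"

definition abs_series_sq_real :: "int \<Rightarrow> 'a \<Rightarrow> real" where
  "abs_series_sq_real k \<omega> = enn2real (abs_series_sq k \<omega>)"

lemma measurable_abs_series_sq[measurable]: "abs_series_sq k \<in> borel_measurable M"
  unfolding abs_series_sq_def by measurable

lemma measurable_abs_series_sq_real[measurable]: "abs_series_sq_real k \<in> borel_measurable M"
  unfolding abs_series_sq_real_def by measurable

lemma nn_integral_abs_series_sq_le: "(\<integral>\<^sup>+\<omega>. abs_series_sq k \<omega> \<partial>M) \<le> ennreal (2 * C 0 * h_norm\<^sup>2)"
proof -
  have "incseq (\<lambda>n \<omega>. ennreal ((fir_abs_out (sym_ival n) k \<omega>)\<^sup>2))"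
    by (auto simp: incseq_def le_fun_def
        intro!: ennreal_leI power_mono fir_abs_out_mono fir_abs_out_nonneg)
  then have "(\<integral>\<^sup>+\<omega>. abs_series_sq k \<omega> \<partial>M)
      = (SUP n. \<integral>\<^sup>+\<omega>. ennreal ((fir_abs_out (sym_ival n) k \<omega>)\<^sup>2) \<partial>M)"
    unfolding abs_series_sq_def by (rule nn_integral_monotone_convergence_SUP) measurable
  also have "\<dots> = (SUP n. ennreal (\<integral>\<omega>. (fir_abs_out (sym_ival n) k \<omega>)\<^sup>2 \<partial>M))"
    by (intro SUP_cong refl nn_integral_eq_integral integrable_fir_abs_out_sq) auto
  also have "\<dots> \<le> ennreal (2 * C 0 * h_norm\<^sup>2)"
    by (intro SUP_least ennreal_leI integral_fir_abs_out_sq_le) auto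
  finally show ?thesis .
qed

lemma AE_abs_series_sq_finite: "AE \<omega> in M. abs_series_sq k \<omega> < \<top>"
proof -
  have "(\<integral>\<^sup>+\<omega>. abs_series_sq k \<omega> \<partial>M) \<noteq> \<infinity>"
    using nn_integral_abs_series_sq_le[of k] by (auto simp: top_unique)
  from nn_integral_PInf_AE[OF measurable_abs_series_sq this] show ?thesis
    by eventually_elim (simp add: less_top)
qed

lemma integrable_abs_series_sq_real: "integrable M (abs_series_sq_real k)"
proof (rule integrableI_nonneg)
  have "(\<integral>\<^sup>+\<omega>. ennreal (abs_series_sq_real k \<omega>) \<partial>M) \<le> (\<integral>\<^sup>+\<omega>. abs_series_sq k \<omega> \<partial>M)"
    by (rule nn_integral_mono) (simp add: abs_series_sq_real_def ennreal_enn2real_if)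
  also have "\<dots> < \<infinity>"
    using nn_integral_abs_series_sq_le[of k] by (simp add: order_le_less_trans)
  finally show "(\<integral>\<^sup>+\<omega>. ennreal (abs_series_sq_real k \<omega>) \<partial>M) < \<infinity>" .
qed (simp_all add: abs_series_sq_real_def)

lemma fir_abs_out_sq_le:
  assumes "abs_series_sq k \<omega> < \<top>"
  shows "(fir_abs_out (sym_ival n) k \<omega>)\<^sup>2 \<le> abs_series_sq_real k \<omega>"
proof -
  have "ennreal ((fir_abs_out (sym_ival n) k \<omega>)\<^sup>2) \<le> abs_series_sq k \<omega>"
    unfolding abs_series_sq_def by (rule SUP_upper) auto
  from enn2real_mono[OF this assms] show ?thesis by (simp add: abs_series_sq_real_def)
qed

lemma summable_on_filter_series_iff:
  "(\<lambda>a. X (k - a) \<omega> * h a) summable_on UNIV \<longleftrightarrow> abs_series_sq k \<omega> < \<top>"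
proof
  assume "(\<lambda>a. X (k - a) \<omega> * h a) summable_on UNIV"
  then obtain B where B: "\<And>n. fir_abs_out (sym_ival n) k \<omega> \<le> B"
    by (auto simp: summable_on_int_iff_bdd_sym_ival_sums bdd_above_def fir_abs_out_def abs_mult)
  have "abs_series_sq k \<omega> \<le> ennreal (B\<^sup>2)"
    unfolding abs_series_sq_def
    by (intro SUP_least ennreal_leI power_mono B fir_abs_out_nonneg)
  then show "abs_series_sq k \<omega> < \<top>"
    by (simp add: order_le_less_trans)
next
  assume finite: "abs_series_sq k \<omega> < \<top>"
  have "fir_abs_out (sym_ival n) k \<omega> \<le> 1 + abs_series_sq_real k \<omega>" for n
    using le_one_plus_square[of "fir_abs_out (sym_ival n) k \<omega>"] fir_abs_out_sq_le[OF finite, of n]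
    by linarith
  then show "(\<lambda>a. X (k - a) \<omega> * h a) summable_on UNIV"
    unfolding summable_on_int_iff_bdd_sym_ival_sums
    by (intro bdd_aboveI2[where M="1 + abs_series_sq_real k \<omega>"]) (simp add: fir_abs_out_def abs_mult)
qed

lemma fir_out_tendsto_filt_out:
  assumes "abs_series_sq k \<omega> < \<top>"
  shows "(\<lambda>n. fir_out (sym_ival n) k \<omega>) \<longlonglongrightarrow> filt_out X h k \<omega>"
  unfolding fir_out_def filt_out_def
  using assms summable_on_filter_series_iff by (intro has_sum_sym_ival_tendsto has_sum_infsum) blast

text \<open>The infinite sum defining \<open>filt_out\<close> takes the junk value 0 where the series does not
  converge; this case split exhibits \<open>filt_out\<close> as a measurable function.\<close>

lemma filt_out_eq_lim:
  "filt_out X h k \<omega> = (if abs_series_sq k \<omega> < \<top> then lim (\<lambda>n. fir_out (sym_ival n) k \<omega>) else 0)"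
  using fir_out_tendsto_filt_out[THEN limI, of k \<omega>] summable_on_filter_series_iff[of k \<omega>]
    infsum_not_exists[of "\<lambda>a. X (k - a) \<omega> * h a" UNIV]
  by (auto simp: filt_out_def)

lemma measurable_filt_out[measurable]: "filt_out X h k \<in> borel_measurable M"
  unfolding filt_out_eq_lim[abs_def] by measurable

lemma integral_filt_out: "(\<integral>\<omega>. filt_out X h k \<omega> \<partial>M) = 0"
proof -
  have bound: "AE \<omega> in M. norm (fir_out (sym_ival n) k \<omega>) \<le> 1 + abs_series_sq_real k \<omega>" for n
    using AE_abs_series_sq_finite[of k]
  proof eventually_elim
    case (elim \<omega>)
    then show ?case
      using abs_fir_out_le[of "sym_ival n" k \<omega>] fir_abs_out_sq_le[OF elim, of n]
        le_one_plus_square[of "fir_abs_out (sym_ival n) k \<omega>"]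
      by simp
  qed
  have "(\<lambda>n. \<integral>\<omega>. fir_out (sym_ival n) k \<omega> \<partial>M) \<longlonglongrightarrow> (\<integral>\<omega>. filt_out X h k \<omega> \<partial>M)"
    using AE_abs_series_sq_finite[of k]
    by (intro integral_dominated_convergence[OF _ _ _ _ bound])
       (auto elim!: AE_mp intro!: integrable_abs_series_sq_real fir_out_tendsto_filt_out)
  then show ?thesis by (simp add: integral_fir_out LIMSEQ_const_iff)
qed

lemma fir_power_tendsto_integral_filt_out_sq:
  "(\<lambda>n. fir_power (sym_ival n)) \<longlonglongrightarrow> (\<integral>\<omega>. (filt_out X h k \<omega>)\<^sup>2 \<partial>M)"
proof -
  have bound: "AE \<omega> in M. norm ((fir_out (sym_ival n) k \<omega>)\<^sup>2) \<le> abs_series_sq_real k \<omega>" for n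
    using AE_abs_series_sq_finite[of k]
  proof eventually_elim
    case (elim \<omega>)
    have "(fir_out (sym_ival n) k \<omega>)\<^sup>2 \<le> (fir_abs_out (sym_ival n) k \<omega>)\<^sup>2"
      using abs_fir_out_le by (metis abs_le_square_iff abs_of_nonneg fir_abs_out_nonneg)
    also have "\<dots> \<le> abs_series_sq_real k \<omega>" by (rule fir_abs_out_sq_le[OF elim])
    finally show ?case by simp
  qed
  have "(\<lambda>n. \<integral>\<omega>. (fir_out (sym_ival n) k \<omega>)\<^sup>2 \<partial>M) \<longlonglongrightarrow> (\<integral>\<omega>. (filt_out X h k \<omega>)\<^sup>2 \<partial>M)"
    using AE_abs_series_sq_finite[of k]
    by (intro integral_dominated_convergence[OF _ _ integrable_abs_series_sq_real _ bound])
       (auto elim!: AE_mp intro!: tendsto_power fir_out_tendsto_filt_out)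
  then show ?thesis by (simp add: integral_fir_out_sq)
qed

definition output_power :: real where
  "output_power = (\<integral>\<omega>. (filt_out X h 0 \<omega>)\<^sup>2 \<partial>M)"

lemma fir_power_tendsto_output_power: "(\<lambda>n. fir_power (sym_ival n)) \<longlonglongrightarrow> output_power"
  unfolding output_power_def by (rule fir_power_tendsto_integral_filt_out_sq)

lemma cov_matrix_filt_out_diag: "cov_matrix M (filt_out X h) k k = output_power"
  using LIMSEQ_unique[OF fir_power_tendsto_integral_filt_out_sq[of k] fir_power_tendsto_output_power]
  by (simp add: cov_matrix_def covar_def integral_filt_out power2_eq_square)

lemma trunc_out_eq_fir_out: "trunc_out X h N k = fir_out {k - int N + 1..k + int N} k"
proof
  fix \<omega>
  show "trunc_out X h N k \<omega> = fir_out {k - int N + 1..k + int N} k \<omega>"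
    unfolding trunc_out_def fir_out_def
    by (rule sum.reindex_bij_witness[where i="\<lambda>j. k - j" and j="\<lambda>a. k - a"]) auto
qed

lemma cov_matrix_trunc_out_diag:
  "cov_matrix M (trunc_out X h N) k k = fir_power {k - int N + 1..k + int N}"
  using integral_fir_out_sq[of "{k - int N + 1..k + int N}" k]
  by (simp add: cov_matrix_def covar_def trunc_out_eq_fir_out integral_fir_out power2_eq_square)

lemma fir_power_diff_le:
  assumes "finite B" "A \<subseteq> B"
  shows "\<bar>fir_power B - fir_power A\<bar> \<le> 2 * C_norm * h_norm * h_tail A"
proof -
  let ?g = "\<lambda>a b. h a * h b * C (a - b)"
  have "finite A" using assms finite_subset by blast
  have "fir_power B = (\<Sum>a\<in>B - A. \<Sum>b\<in>B. ?g a b) + (\<Sum>a\<in>A. \<Sum>b\<in>B. ?g a b)"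
    unfolding fir_power_def by (rule sum.subset_diff[OF assms(2,1)])
  also have "(\<Sum>a\<in>A. \<Sum>b\<in>B. ?g a b) = (\<Sum>a\<in>A. (\<Sum>b\<in>B - A. ?g a b) + (\<Sum>b\<in>A. ?g a b))"
    by (intro sum.cong refl sum.subset_diff[OF assms(2,1)])
  also have "\<dots> = (\<Sum>a\<in>A. \<Sum>b\<in>B - A. ?g a b) + fir_power A"
    unfolding fir_power_def by (simp add: sum.distrib)
  finally have split: "fir_power B - fir_power A
      = (\<Sum>a\<in>B - A. \<Sum>b\<in>B. ?g a b) + (\<Sum>a\<in>A. \<Sum>b\<in>B - A. ?g a b)"
    by simp
  have "(\<Sum>a\<in>B - A. \<bar>h a\<bar>) * (\<Sum>b\<in>B. \<bar>h b\<bar>) \<le> h_tail A * h_norm"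
    using assms \<open>finite A\<close> h_tail_nonneg
    by (intro mult_mono sum_abs_h_diff_le_h_tail sum_abs_h_le_h_norm sum_nonneg) auto
  then have outer: "\<bar>\<Sum>a\<in>B - A. \<Sum>b\<in>B. ?g a b\<bar> \<le> C_norm * (h_tail A * h_norm)"
    by (rule order_trans[OF abs_double_sum_le[OF abs_C_le_C_norm] mult_left_mono[OF _ C_norm_nonneg]])
  have "(\<Sum>a\<in>A. \<bar>h a\<bar>) * (\<Sum>b\<in>B - A. \<bar>h b\<bar>) \<le> h_norm * h_tail A"
    using assms \<open>finite A\<close> h_norm_nonneg
    by (intro mult_mono sum_abs_h_diff_le_h_tail sum_abs_h_le_h_norm sum_nonneg) auto
  then have inner: "\<bar>\<Sum>a\<in>A. \<Sum>b\<in>B - A. ?g a b\<bar> \<le> C_norm * (h_norm * h_tail A)"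
    by (rule order_trans[OF abs_double_sum_le[OF abs_C_le_C_norm] mult_left_mono[OF _ C_norm_nonneg]])
  show ?thesis unfolding split using outer inner by (simp add: algebra_simps)
qed

lemma abs_output_power_diff_le:
  assumes "finite A"
  shows "\<bar>output_power - fir_power A\<bar> \<le> 2 * C_norm * h_norm * h_tail A"
proof (rule LIMSEQ_le_const2)
  show "(\<lambda>n. \<bar>fir_power (sym_ival n) - fir_power A\<bar>) \<longlonglongrightarrow> \<bar>output_power - fir_power A\<bar>"
    by (intro tendsto_intros fir_power_tendsto_output_power)
  obtain m where "A \<subseteq> sym_ival m" using finite_subset_sym_ival[OF assms] .
  then have "\<forall>n\<ge>m. \<bar>fir_power (sym_ival n) - fir_power A\<bar> \<le> 2 * C_norm * h_norm * h_tail A"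
    by (auto intro!: fir_power_diff_le)
  then show "\<exists>m. \<forall>n\<ge>m. \<bar>fir_power (sym_ival n) - fir_power A\<bar> \<le> 2 * C_norm * h_norm * h_tail A" ..
qed

lemma ntrace_cov_gap_le:
  "\<bar>ntrace {-int N..int N - 1} (cov_matrix M (filt_out X h))
      - ntrace {-int N..int N - 1} (cov_matrix M (trunc_out X h N))\<bar>
    \<le> 2 * C_norm * h_norm
      * ((\<Sum>k\<in>{-int N..int N - 1}. h_tail {k - int N + 1..k + int N}) / real (2 * N))"
proof -
  define I where "I = {-int N..int N - 1}"
  have "ntrace I (cov_matrix M (filt_out X h)) - ntrace I (cov_matrix M (trunc_out X h N))
      = (\<Sum>k\<in>I. output_power - fir_power {k - int N + 1..k + int N}) / real (2 * N)"
    by (simp add: ntrace_def I_def cov_matrix_filt_out_diag cov_matrix_trunc_out_diag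
        sum_subtractf diff_divide_distrib)
  also have "\<bar>\<dots>\<bar> \<le> (\<Sum>k\<in>I. 2 * C_norm * h_norm * h_tail {k - int N + 1..k + int N}) / real (2 * N)"
    by (auto intro!: divide_right_mono order_trans[OF sum_abs] sum_mono abs_output_power_diff_le)
  finally show ?thesis
    by (simp add: I_def sum_distrib_left)
qed

end

theorem mainTheorem8:
  fixes M :: "'a measure" and X :: "int \<Rightarrow> 'a \<Rightarrow> real"
    and C :: "int \<Rightarrow> real" and h :: "int \<Rightarrow> real"
  assumes "prob_space M"
    and "\<And>t. X t \<in> borel_measurable M"
    and "\<And>t. integrable M (\<lambda>\<omega>. (X t \<omega>)\<^sup>2)"
    and "\<And>t. (\<integral>\<omega>. X t \<omega> \<partial>M) = 0"
    and "\<And>t \<tau>. (\<integral>\<omega>. X t \<omega> * X (t + \<tau>) \<omega> \<partial>M) = C \<tau>"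
    and "(\<lambda>\<tau>. \<bar>C \<tau>\<bar>) summable_on UNIV"
    and "(\<lambda>\<tau>. \<bar>h \<tau>\<bar>) summable_on UNIV"
  shows "(\<lambda>N. \<bar>ntrace {-int N..int N - 1} (cov_matrix M (filt_out X h))
              - ntrace {-int N..int N - 1} (cov_matrix M (trunc_out X h N))\<bar>)
           \<longlonglongrightarrow> 0"
proof -
  interpret stationary_filter M X C h
    by (rule stationary_filter.intro[OF assms(1)]) (unfold_locales; fact assms(2-7))
  have "(\<lambda>N. (\<Sum>k\<in>{-int N..int N - 1}. h_tail {k - int N + 1..k + int N}) / real (2 * N))
      \<longlonglongrightarrow> 0"
    unfolding h_tail_def by (rule window_tails_average_tendsto_zero) (auto simp: summable_h)
  then have gap_bound: "(\<lambda>N. 2 * C_norm * h_norm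
      * ((\<Sum>k\<in>{-int N..int N - 1}. h_tail {k - int N + 1..k + int N}) / real (2 * N))) \<longlonglongrightarrow> 0"
    by (rule tendsto_mult_right_zero)
  show ?thesis
    by (rule tendsto_sandwich[OF _ _ tendsto_const gap_bound]) (simp, intro always_eventually allI ntrace_cov_gap_le)
qed

end
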